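(* Let $(\vec s_i)_{i\in\mathbb N}$ be a strictly increasing sequence of oriented separations of a graph $G$ and $(P_i)_{i\in\mathbb N}$ a sequence of pre-tangles in $G$. Suppose that (IM1) $\overleftarrow{s}_i\in P_i$ and $\vec s_i\in P_{i+1}$ for all $i$, and (IM2') the separation $s_i$ efficiently distinguishes $P_i$ and $P_{i+1}$ for all $i$. Then (IM2) holds: for all $i<j$, every separation of minimal order among $s_i,\dots,s_{j-1}$ efficiently distinguishes $P_i$ and $P_j$.
   Context: Notation: $s$ denotes a separation (an unordered pair $\{A,B\}$ of subsets of $V(G)$ with $A\cup B=V(G)$ and no edge between $A\setminus B$ and $B\setminus A$; order $|s|=|A\cap B|$), $\vec s$ and $\overleftarrow{s}$ its two orientations $(A,B)$, $(B,A)$; oriented separations are ordered by $(A,B)\le(C,D)$ iff $A\subseteq C$ and $B\supseteq D$. A set $O$ of oriented separations is consistent if there are no $(A,B),(C,D)\in O$ with $\{A,B\}\ne\{C,D\}$ and $(B,A)\le(C,D)$. A pre-tangle is a consistent set $P$ which, for some $k\in\mathbb N\cup\{\aleph_0\}$, contains exactly one orientation of every separation of order $<k$ and nothing else. A separation distinguishes two pre-tangles if both contain an orientation of it but different ones; efficiently if it has minimum order among all separations distinguishing them. *)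

theory Defs
  imports Main "HOL-Library.Extended_Nat"
begin

text \<open>A graph is given by a vertex set V and an edge set E of (ordered) pairs;
  an edge (x,y) joins x and y. An oriented separation is the pair (A,B);
  the underlying unordered separation is {A,B}.\<close>

definition is_graph :: "'v set \<Rightarrow> ('v \<times> 'v) set \<Rightarrow> bool" where
  "is_graph V E \<longleftrightarrow> E \<subseteq> V \<times> V"

definition is_sep :: "'v set \<Rightarrow> ('v \<times> 'v) set \<Rightarrow> 'v set \<times> 'v set \<Rightarrow> bool" where
  "is_sep V E s \<longleftrightarrow> (case s of (A, B) \<Rightarrow>
     A \<union> B = V \<and> (\<forall>x\<in>A - B. \<forall>y\<in>B - A. (x, y) \<notin> E \<and> (y, x) \<notin> E))"

definition flip :: "'v set \<times> 'v set \<Rightarrow> 'v set \<times> 'v set" where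
  "flip s = (snd s, fst s)"

definition unor :: "'v set \<times> 'v set \<Rightarrow> 'v set set" where
  "unor s = {fst s, snd s}"

definition sep_order :: "'v set \<times> 'v set \<Rightarrow> enat" where
  "sep_order s = (if finite (fst s \<inter> snd s) then enat (card (fst s \<inter> snd s)) else \<infinity>)"

definition sep_le :: "'v set \<times> 'v set \<Rightarrow> 'v set \<times> 'v set \<Rightarrow> bool" where
  "sep_le s t \<longleftrightarrow> fst s \<subseteq> fst t \<and> snd t \<subseteq> snd s"

definition sep_less :: "'v set \<times> 'v set \<Rightarrow> 'v set \<times> 'v set \<Rightarrow> bool" where
  "sep_less s t \<longleftrightarrow> sep_le s t \<and> s \<noteq> t"

definition consistent :: "('v set \<times> 'v set) set \<Rightarrow> bool" where
  "consistent O' \<longleftrightarrow>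
     \<not> (\<exists>s\<in>O'. \<exists>t\<in>O'. unor s \<noteq> unor t \<and> sep_le (flip s) t)"

text \<open>Pre-tangle: for some k \<in> \<nat> \<union> {aleph_0} (modelled as enat, \<infinity> = aleph_0),
  exactly one orientation of every separation of order < k and nothing else.\<close>
definition pre_tangle :: "'v set \<Rightarrow> ('v \<times> 'v) set \<Rightarrow> ('v set \<times> 'v set) set \<Rightarrow> bool" where
  "pre_tangle V E P \<longleftrightarrow> consistent P \<and>
     (\<exists>k::enat.
        (\<forall>s\<in>P. is_sep V E s \<and> sep_order s < k) \<and>
        (\<forall>s. is_sep V E s \<and> sep_order s < k \<longrightarrow>
             (s \<in> P \<or> flip s \<in> P) \<and> (s \<in> P \<and> flip s \<in> P \<longrightarrow> s = flip s)))"

definition distinguishes ::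
  "'v set \<Rightarrow> ('v \<times> 'v) set \<Rightarrow> ('v set \<times> 'v set) set \<Rightarrow> ('v set \<times> 'v set) set
   \<Rightarrow> 'v set \<times> 'v set \<Rightarrow> bool" where
  "distinguishes V E P Q s \<longleftrightarrow> is_sep V E s \<and>
     (\<exists>x y. x \<in> P \<and> y \<in> Q \<and> x \<in> {s, flip s} \<and> y \<in> {s, flip s} \<and> x \<noteq> y)"

definition eff_distinguishes ::
  "'v set \<Rightarrow> ('v \<times> 'v) set \<Rightarrow> ('v set \<times> 'v set) set \<Rightarrow> ('v set \<times> 'v set) set
   \<Rightarrow> 'v set \<times> 'v set \<Rightarrow> bool" where
  "eff_distinguishes V E P Q s \<longleftrightarrow> distinguishes V E P Q s \<and>
     (\<forall>t. distinguishes V E P Q t \<longrightarrow> sep_order s \<le> sep_order t)"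

end

theory Submission
  imports Defs
begin

text \<open>A pre-tangle orients every separation of order at most that of one of its members,
  and by consistency it orients a separation \<open>a\<close> below a member \<open>b\<close> as \<open>a\<close> itself, unless \<open>b\<close>
  is the inverse of \<open>a\<close>. Separations in pre-tangles have finite order, so a strictly increasing
  chain never reaches a separation \<open>(V, B)\<close>; this rules out \<open>s l\<close> being the inverse of \<open>s k\<close>
  for \<open>k \<le> l\<close>. Hence \<open>s m \<le> s (j - 1) \<in> P j\<close> gives \<open>s m \<in> P j\<close>, and dually the inverse of
  \<open>s m\<close> lies in \<open>P i\<close>. A separation of order less than that of \<open>s m\<close> is oriented by all of
  \<open>P i, \<dots>, P j\<close>; if it distinguished \<open>P i\<close> and \<open>P j\<close>, it would distinguish some \<open>P l\<close> and
  \<open>P (l + 1)\<close>, contradicting the efficiency of \<open>s l\<close>.\<close>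

lemma flip_flip [simp]: "flip (flip t) = t"
  by (simp add: flip_def)

lemma sep_order_flip [simp]: "sep_order (flip t) = sep_order t"
  by (simp add: sep_order_def flip_def Int_commute)

lemma is_sep_flip: "is_sep V E t \<Longrightarrow> is_sep V E (flip t)"
  by (auto simp: is_sep_def flip_def split: prod.splits)

lemma sep_le_flip_iff [simp]: "sep_le (flip a) (flip b) \<longleftrightarrow> sep_le b a"
  by (auto simp: sep_le_def flip_def)

lemma sep_le_refl [simp]: "sep_le a a"
  by (simp add: sep_le_def)

lemma sep_le_trans: "sep_le a b \<Longrightarrow> sep_le b c \<Longrightarrow> sep_le a c"
  unfolding sep_le_def by blast

lemma snd_eq_if_sep_le_flip:
  assumes "is_sep V E a" "sep_le a (flip a)"
  shows "snd a = V"
  using assms by (auto simp: is_sep_def sep_le_def flip_def split: prod.splits)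

lemma pre_tangle_finite_order:
  assumes "pre_tangle V E P" "x \<in> P"
  shows "finite (fst x \<inter> snd x)"
proof -
  obtain k where "sep_order x < k"
    using assms unfolding pre_tangle_def by blast
  then have "sep_order x \<noteq> \<infinity>"
    by (metis enat_ord_simps(6))
  then show ?thesis
    by (auto simp: sep_order_def split: if_splits)
qed

lemma pre_tangle_orients:
  assumes "pre_tangle V E P" "x \<in> P" "is_sep V E t" "sep_order t \<le> sep_order x"
  shows "t \<in> P \<or> flip t \<in> P"
proof -
  obtain k where k: "\<forall>s\<in>P. sep_order s < k"
    "\<forall>s. is_sep V E s \<and> sep_order s < k \<longrightarrow> s \<in> P \<or> flip s \<in> P"
    using assms(1) unfolding pre_tangle_def by blast
  have "sep_order t < k"
    using k(1) assms(2,4) by (blast intro: le_less_trans)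
  then show ?thesis
    using k(2) assms(3) by blast
qed

lemma pre_tangle_flip_mem:
  assumes "pre_tangle V E P" "t \<in> P" "flip t \<in> P"
  shows "t = flip t"
  using assms unfolding pre_tangle_def by blast

lemma pre_tangle_down_closed:
  assumes P: "pre_tangle V E P" and b: "b \<in> P"
    and a: "is_sep V E a" "sep_le a b" "sep_order a \<le> sep_order b"
    and not_inverse: "b \<noteq> flip a"
  shows "a \<in> P"
proof (rule ccontr)
  assume "a \<notin> P"
  with pre_tangle_orients[OF P b a(1,3)] have "flip a \<in> P"
    by blast
  with P b a(2) have "unor (flip a) = unor b"
    unfolding pre_tangle_def consistent_def by fastforce
  then have "{snd a, fst a} = {fst b, snd b}"
    by (simp add: unor_def flip_def)
  then have "b = a \<or> b = flip a"
    unfolding flip_def by (metis doubleton_eq_iff prod.collapse)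
  with \<open>a \<notin> P\<close> b not_inverse show False
    by blast
qed

lemma not_distinguishes_along_path:
  assumes "i \<le> j"
    and pt: "\<forall>l\<in>{i..j}. pre_tangle V E (P l)"
    and oriented: "\<forall>l\<in>{i..<j}. \<exists>u\<in>P (Suc l). sep_order t \<le> sep_order u"
    and steps: "\<forall>l\<in>{i..<j}. \<not> distinguishes V E (P l) (P (Suc l)) t"
  shows "\<not> distinguishes V E (P i) (P j) t"
proof
  assume "distinguishes V E (P i) (P j) t"
  then obtain x y where t: "is_sep V E t" and xy: "x \<in> P i" "y \<in> P j" "x \<noteq> y"
    "x \<in> {t, flip t}" "y \<in> {t, flip t}"
    unfolding distinguishes_def by blast
  have x_sep: "is_sep V E x"
    using xy(4) t is_sep_flip by blast
  have "x \<in> P j"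
    using \<open>i \<le> j\<close>
  proof (induction j rule: dec_induct)
    case base
    show ?case using xy(1) .
  next
    case (step l)
    obtain u where "u \<in> P (Suc l)" "sep_order x \<le> sep_order u"
      using oriented step.hyps xy(4) by fastforce
    then have "x \<in> P (Suc l) \<or> flip x \<in> P (Suc l)"
      using pt step.hyps pre_tangle_orients x_sep by fastforce
    moreover have "\<not> distinguishes V E (P l) (P (Suc l)) t"
      using steps step.hyps by simp
    ultimately show ?case
      using step.IH xy(3,4,5) t unfolding distinguishes_def by fastforce
  qed
  moreover have "y = flip x"
    using xy(3,4,5) by auto
  ultimately show False
    using pre_tangle_flip_mem pt xy(2,3) \<open>i \<le> j\<close> by fastforce
qed

lemma eff_distinguishes_if_min_along_path:
  assumes "i \<le> j"
    and pt: "\<forall>l\<in>{i..j}. pre_tangle V E (P l)"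
    and mem: "\<forall>l\<in>{i..<j}. s l \<in> P (Suc l)"
    and eff: "\<forall>l\<in>{i..<j}. eff_distinguishes V E (P l) (P (Suc l)) (s l)"
    and min: "\<forall>l\<in>{i..<j}. sep_order r \<le> sep_order (s l)"
    and "distinguishes V E (P i) (P j) r"
  shows "eff_distinguishes V E (P i) (P j) r"
  unfolding eff_distinguishes_def
proof (intro conjI allI impI)
  fix t
  assume t: "distinguishes V E (P i) (P j) t"
  show "sep_order r \<le> sep_order t"
  proof (rule ccontr)
    assume "\<not> sep_order r \<le> sep_order t"
    then have below: "\<forall>l\<in>{i..<j}. sep_order t < sep_order (s l)"
      using min by (meson le_less_trans not_le)
    then have "\<forall>l\<in>{i..<j}. \<not> distinguishes V E (P l) (P (Suc l)) t"
      using eff unfolding eff_distinguishes_def by (meson not_le)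
    moreover have "\<forall>l\<in>{i..<j}. \<exists>u\<in>P (Suc l). sep_order t \<le> sep_order u"
      using below mem by (meson less_imp_le)
    ultimately show False
      using not_distinguishes_along_path[OF \<open>i \<le> j\<close> pt] t by blast
  qed
qed (use assms(6) in blast)

lemma strict_chain_sep_le:
  assumes "\<forall>i. sep_less (s i) (s (Suc i))" "k \<le> l"
  shows "sep_le (s k) (s l)"
  using assms(2)
proof (induction l rule: dec_induct)
  case (step l)
  then show ?case
    using assms(1) sep_le_trans unfolding sep_less_def by blast
qed simp

text \<open>Once the first side is \<open>V\<close>, the second sides of a strictly increasing chain strictly
  decrease; finiteness of the orders makes this impossible.\<close>

lemma strict_chain_fst_neq:
  assumes seps: "\<forall>i. is_sep V E (s i)"
    and incr: "\<forall>i. sep_less (s i) (s (Suc i))"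
    and fin: "\<forall>i. finite (fst (s i) \<inter> snd (s i))"
  shows "fst (s n) \<noteq> V"
proof
  assume V: "fst (s n) = V"
  have sub: "fst (s i) \<subseteq> V \<and> snd (s i) \<subseteq> V" for i
    using seps[rule_format, of i] by (cases "s i") (auto simp: is_sep_def)
  have fst_V: "fst (s (n + k)) = V" for k
  proof (induction k)
    case (Suc k)
    then show ?case
      using incr sub[of "n + Suc k"] unfolding sep_less_def sep_le_def by auto
  qed (use V in simp)
  define B where "B k = snd (s (n + k))" for k
  have "(B (Suc k), B k) \<in> finite_psubset" for k
  proof -
    have "snd (s (n + k)) = fst (s (n + k)) \<inter> snd (s (n + k))"
      using fst_V sub by blast
    then have "finite (snd (s (n + k)))"
      using fin by metis
    moreover have "snd (s (n + Suc k)) \<subset> snd (s (n + k))"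
      using incr fst_V[of k] fst_V[of "Suc k"] unfolding sep_less_def sep_le_def
      by (metis add_Suc_right prod_eq_iff psubsetI)
    ultimately show ?thesis
      unfolding finite_psubset_def B_def by blast
  qed
  then show False
    using wf_finite_psubset unfolding wf_iff_no_infinite_down_chain by blast
qed

lemma strict_chain_not_flip:
  assumes seps: "\<forall>i. is_sep V E (s i)"
    and incr: "\<forall>i. sep_less (s i) (s (Suc i))"
    and fin: "\<forall>i. finite (fst (s i) \<inter> snd (s i))"
    and "k \<le> l"
  shows "s l \<noteq> flip (s k)"
proof
  assume "s l = flip (s k)"
  then have "sep_le (s k) (flip (s k))"
    using strict_chain_sep_le[OF incr \<open>k \<le> l\<close>] by simp
  then have "snd (s k) = V"
    using snd_eq_if_sep_le_flip seps by blast
  then have "fst (s l) = V"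
    using \<open>s l = flip (s k)\<close> by (simp add: flip_def)
  then show False
    using strict_chain_fst_neq[OF seps incr fin] by blast
qed

lemma strict_chain_mem_if_le:
  assumes seps: "\<forall>i. is_sep V E (s i)"
    and incr: "\<forall>i. sep_less (s i) (s (Suc i))"
    and fin: "\<forall>i. finite (fst (s i) \<inter> snd (s i))"
    and Q: "pre_tangle V E Q" "s l \<in> Q"
    and "k \<le> l" "sep_order (s k) \<le> sep_order (s l)"
  shows "s k \<in> Q"
  using pre_tangle_down_closed[OF Q seps[rule_format]] strict_chain_sep_le[OF incr]
    strict_chain_not_flip[OF seps incr fin] assms(6,7) by blast

lemma strict_chain_flip_mem_if_le:
  assumes seps: "\<forall>i. is_sep V E (s i)"
    and incr: "\<forall>i. sep_less (s i) (s (Suc i))"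
    and fin: "\<forall>i. finite (fst (s i) \<inter> snd (s i))"
    and Q: "pre_tangle V E Q" "flip (s k) \<in> Q"
    and "k \<le> l" "sep_order (s l) \<le> sep_order (s k)"
  shows "flip (s l) \<in> Q"
proof (rule pre_tangle_down_closed[OF Q is_sep_flip[OF seps[rule_format]]])
  show "sep_le (flip (s l)) (flip (s k))"
    using strict_chain_sep_le[OF incr \<open>k \<le> l\<close>] by simp
  show "sep_order (flip (s l)) \<le> sep_order (flip (s k))"
    using assms(7) by simp
  show "flip (s k) \<noteq> flip (flip (s l))"
    using strict_chain_not_flip[OF seps incr fin \<open>k \<le> l\<close>] by (metis flip_flip)
qed

theorem mainTheorem13:
  fixes V :: "'v set" and E :: "('v \<times> 'v) set"
    and s :: "nat \<Rightarrow> 'v set \<times> 'v set"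
    and P :: "nat \<Rightarrow> ('v set \<times> 'v set) set"
  assumes graph: "is_graph V E"
    and seps: "\<forall>i. is_sep V E (s i)"
    and incr: "\<forall>i. sep_less (s i) (s (Suc i))"
    and pt: "\<forall>i. pre_tangle V E (P i)"
    and IM1: "\<forall>i. flip (s i) \<in> P i \<and> s i \<in> P (Suc i)"
    and IM2': "\<forall>i. eff_distinguishes V E (P i) (P (Suc i)) (s i)"
  shows "\<forall>i j. i < j \<longrightarrow>
           (\<forall>m\<in>{i..<j}. (\<forall>l\<in>{i..<j}. sep_order (s m) \<le> sep_order (s l)) \<longrightarrow>
              eff_distinguishes V E (P i) (P j) (s m))"
proof (intro allI impI ballI)
  fix i j m
  assume m: "m \<in> {i..<j}" and min: "\<forall>l\<in>{i..<j}. sep_order (s m) \<le> sep_order (s l)"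
  have fin: "\<forall>n. finite (fst (s n) \<inter> snd (s n))"
    using pt IM1 pre_tangle_finite_order by blast
  obtain l where l: "j = Suc l"
    using m by (cases j) auto
  have "s m \<in> P j"
    using strict_chain_mem_if_le[OF seps incr fin pt[rule_format, of j], of l m] IM1 l min m
    by auto
  moreover have "flip (s m) \<in> P i"
    using strict_chain_flip_mem_if_le[OF seps incr fin pt[rule_format], of i] IM1 min m by simp
  ultimately have "distinguishes V E (P i) (P j) (s m)"
    unfolding distinguishes_def using seps strict_chain_not_flip[OF seps incr fin, of m m]
    by fastforce
  then show "eff_distinguishes V E (P i) (P j) (s m)"
    using eff_distinguishes_if_min_along_path[of i j V E P s "s m"] pt IM1 IM2' min m by auto
qed

end
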